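(* Let $I=[x_0,x_N]$ with partition $x_0<x_1<\dots<x_N$, and for $i\in\{1,\dots,N\}$ let $I_i=[x_{i-1},x_i]$, $a_i=\frac{x_i-x_{i-1}}{x_N-x_0}$, $l_i(x)=a_ix+\frac{x_Nx_{i-1}-x_0x_i}{x_N-x_0}$ (so $l_i:I\to I_i$ is an affine bijection) and $Q_i=l_i^{-1}:I_i\to I$. Let $0<d\le 1$ and $f\in Lip_d(I)$. For $r\in\mathbb{N}$ let $b_r\in Lip_{d,f}(I)$ with $\|b\|_d:=\sup_{r\in\mathbb{N}}\|b_r\|_d<\infty$, and let $\alpha_{i,r}\in Lip_d(I)$ ($i=1,\dots,N$, $r\in\mathbb{N}$) satisfy $\max_{1\le i\le N}\frac{\|\alpha_{i,r}\|_d}{a_i^d}<\frac12$ for each $r$. Define $T^{\alpha_r}$ on $Lip_{d,f}(I)$ by $$(T^{\alpha_r}g)(x)=f(x)+\alpha_{i,r}(Q_i(x))\,g(Q_i(x))-\alpha_{i,r}(Q_i(x))\,b_r(Q_i(x)),\qquad x\in I_i,\ i=1,\dots,N.$$ Then: (1) $T^{\alpha_r}$ is well defined as a map $Lip_{d,f}(I)\to Lip_{d,f}(I)$; (2) $T^{\alpha_r}:Lip_{d,f}(I)\to Lip_{d,f}(I)$ is a contraction with respect to $\|\cdot\|_d$; (3) there exists a unique function $f^\alpha_{b,Lip_d}\in Lip_{d,f}(I)$ such that for every $g\in Lip_{d,f}(I)$ the sequence $T^{\alpha_1}\circ T^{\alpha_2}\circ\cdots\circ T^{\alpha_r}g$ converges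 (as $r\to\infty$) to $f^\alpha_{b,Lip_d}$.
   Context: For $g:I\to\mathbb{R}$ and $0<d\le1$, $Lip_d(g)=\sup\{|g(x)-g(y)|/|x-y|^d: x,y\in I, x\ne y\}$; $Lip_d(I)=\{g:I\to\mathbb{R}: Lip_d(g)<\infty\}$ with norm $\|g\|_d=\max\{\|g\|_\infty, Lip_d(g)\}$, a Banach space. $Lip_{d,f}(I)=\{g\in Lip_d(I): g(x_0)=f(x_0),\ g(x_N)=f(x_N)\}$, a closed subspace. Convergence in (3) is with respect to $\|\cdot\|_d$. *)

theory Defs
  imports "HOL-Analysis.Analysis"
begin

definition lip_const :: "real \<Rightarrow> real set \<Rightarrow> (real \<Rightarrow> real) \<Rightarrow> real" where
  "lip_const d I g = Sup {\<bar>g u - g v\<bar> / \<bar>u - v\<bar> powr d | u v. u \<in> I \<and> v \<in> I \<and> u \<noteq> v}"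

definition Lip :: "real \<Rightarrow> real set \<Rightarrow> (real \<Rightarrow> real) set" where
  "Lip d I = {g. bdd_above {\<bar>g u - g v\<bar> / \<bar>u - v\<bar> powr d | u v. u \<in> I \<and> v \<in> I \<and> u \<noteq> v}}"

definition sup_norm :: "real set \<Rightarrow> (real \<Rightarrow> real) \<Rightarrow> real" where
  "sup_norm I g = Sup ((\<lambda>u. \<bar>g u\<bar>) ` I)"

definition lip_norm :: "real \<Rightarrow> real set \<Rightarrow> (real \<Rightarrow> real) \<Rightarrow> real" where
  "lip_norm d I g = max (sup_norm I g) (lip_const d I g)"

definition Lip_f :: "real \<Rightarrow> real \<Rightarrow> real \<Rightarrow> (real \<Rightarrow> real) \<Rightarrow> (real \<Rightarrow> real) set" where
  "Lip_f d p q f = {g \<in> Lip d {p..q}. g p = f p \<and> g q = f q}"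

definition aa :: "(nat \<Rightarrow> real) \<Rightarrow> nat \<Rightarrow> nat \<Rightarrow> real" where
  "aa x N i = (x i - x (i - 1)) / (x N - x 0)"

definition ll :: "(nat \<Rightarrow> real) \<Rightarrow> nat \<Rightarrow> nat \<Rightarrow> real \<Rightarrow> real" where
  "ll x N i t = aa x N i * t + (x N * x (i - 1) - x 0 * x i) / (x N - x 0)"

definition QQ :: "(nat \<Rightarrow> real) \<Rightarrow> nat \<Rightarrow> nat \<Rightarrow> real \<Rightarrow> real" where
  "QQ x N i t = (t - (x N * x (i - 1) - x 0 * x i) / (x N - x 0)) / aa x N i"

(* T^{alpha}: on I_i uses the formula with index i; at the nodes the first interval
   containing t is chosen (well-definedness = agreement with every applicable formula) *)
definition Tmap :: "(nat \<Rightarrow> real) \<Rightarrow> nat \<Rightarrow> (real \<Rightarrow> real) \<Rightarrow> (nat \<Rightarrow> real \<Rightarrow> real)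
    \<Rightarrow> (real \<Rightarrow> real) \<Rightarrow> (real \<Rightarrow> real) \<Rightarrow> real \<Rightarrow> real" where
  "Tmap x N f alpha b g t =
     (let i = (LEAST i. 1 \<le> i \<and> t \<le> x i); s = QQ x N i t
      in f t + alpha i s * g s - alpha i s * b s)"

definition Tcomp :: "(nat \<Rightarrow> real) \<Rightarrow> nat \<Rightarrow> (real \<Rightarrow> real) \<Rightarrow> (nat \<Rightarrow> nat \<Rightarrow> real \<Rightarrow> real)
    \<Rightarrow> (nat \<Rightarrow> real \<Rightarrow> real) \<Rightarrow> nat \<Rightarrow> (real \<Rightarrow> real) \<Rightarrow> real \<Rightarrow> real" where
  "Tcomp x N f alpha b r g =
     foldr (\<lambda>k h. Tmap x N f (\<lambda>i. alpha i k) (b k) h) [1..<Suc r] g"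

end

theory Submission
  imports Defs
begin

(* Let eps = max_i lip_norm alpha_i / a_i^d < 1/2.  On the piece I_i the difference of two images
   is T g - T h = (alpha_i * (g - h)) o Q_i, where g - h vanishes at both ends of I.  Rescaling by
   Q_i multiplies Hoelder quotients by a_i^-d, which the factor alpha_i absorbs; for points in
   different pieces, the vanishing of g - h at the nodes and the concavity of s^d give the
   constant 2^(1-d).  So if g - h has sup norm S and Hoelder constant L, then T g - T h has sup
   norm <= eps S and Hoelder constant <= eps max (L + S) (2^(1-d) L).  This makes T a
   contraction for lip_norm, and for the equivalent norm L + 2 S a contraction with the constant
   max (3/4) (2^-d), independent of r.  As the b_r are bounded, the backward compositions
   T^alpha_1 o ... o T^alpha_r f then form a geometrically Cauchy sequence, and its limit
   attracts the compositions applied to every g. *)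

section \<open>Hoelder bounds\<close>

lemma powr_add_le_two_powr:
  fixes p q d :: real
  assumes p: "p \<ge> 0" and q: "q \<ge> 0" and d: "0 < d" "d \<le> 1"
  shows "p powr d + q powr d \<le> 2 powr (1 - d) * (p + q) powr d"
proof (cases "p = 0 \<or> q = 0")
  case True
  have "(1::real) \<le> 2 powr (1 - d)" using d by (simp add: ge_one_powr_ge_zero)
  then show ?thesis using True p q d
    by (auto simp: mult_le_cancel_right1)
next
  case False
  hence pp: "p > 0" and qp: "q > 0" using p q by auto
  define P where "P = p powr d"
  define Q where "Q = q powr d"
  have P0: "P > 0" "Q > 0" using pp qp by (auto simp: P_def Q_def)
  have cv: "convex_on {0<..} (\<lambda>x::real. x powr (1/d))"
    by (rule powr_convex) (use d in simp)
  have "((1 - 1/2) *\<^sub>R P + (1/2) *\<^sub>R Q) powr (1/d) \<le> (1 - 1/2) * P powr (1/d) + (1/2) * Q powr (1/d)"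
    using convex_onD[OF cv, of "1/2" P Q] P0 by simp
  moreover have "P powr (1/d) = p" "Q powr (1/d) = q"
    using pp qp d by (auto simp: P_def Q_def powr_powr)
  ultimately have h: "((P + Q)/2) powr (1/d) \<le> (p + q)/2" by (simp add: field_simps)
  have "(P+Q)/2 = (((P + Q)/2) powr (1/d)) powr d"
    using P0 d by (simp add: powr_powr)
  also have "\<dots> \<le> ((p+q)/2) powr d"
    by (rule powr_mono2) (use h d P0 in auto)
  also have "\<dots> = (p+q) powr d / 2 powr d"
    using pp qp by (simp add: powr_divide)
  finally have "P + Q \<le> 2 * (p+q) powr d / 2 powr d" by (simp add: mult.commute)
  also have "\<dots> = 2 powr (1 - d) * (p + q) powr d"
    by (simp add: powr_diff)
  finally show ?thesis by (simp add: P_def Q_def)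
qed

lemma lip_const_bound:
  assumes "g \<in> Lip d I" "u \<in> I" "v \<in> I"
  shows "\<bar>g u - g v\<bar> \<le> lip_const d I g * \<bar>u - v\<bar> powr d"
proof (cases "u = v")
  case False
  have "\<bar>g u - g v\<bar> / \<bar>u - v\<bar> powr d \<le> lip_const d I g"
    unfolding lip_const_def
    by (rule cSup_upper) (use assms False in \<open>auto simp: Lip_def\<close>)
  then show ?thesis using False by (simp add: divide_le_eq)
qed simp

lemma LipI:
  assumes "\<And>u v. u \<in> I \<Longrightarrow> v \<in> I \<Longrightarrow> \<bar>g u - g v\<bar> \<le> K * \<bar>u - v\<bar> powr d"
  shows "g \<in> Lip d I"
  unfolding Lip_def bdd_above_def
proof (intro CollectI exI[of _ K] ballI)
  fix z assume "z \<in> {\<bar>g u - g v\<bar> / \<bar>u - v\<bar> powr d |u v. u \<in> I \<and> v \<in> I \<and> u \<noteq> v}"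
  then obtain u v where z: "z = \<bar>g u - g v\<bar> / \<bar>u - v\<bar> powr d" "u \<in> I" "v \<in> I" "u \<noteq> v"
    by blast
  then show "z \<le> K" using assms[OF z(2,3)] by (simp add: divide_le_eq)
qed

lemma lip_const_least:
  assumes "\<And>u v. u \<in> I \<Longrightarrow> v \<in> I \<Longrightarrow> \<bar>g u - g v\<bar> \<le> K * \<bar>u - v\<bar> powr d"
    and "u0 \<in> I" "v0 \<in> I" "u0 \<noteq> v0"
  shows "lip_const d I g \<le> K"
  unfolding lip_const_def
proof (rule cSup_least)
  fix z assume "z \<in> {\<bar>g u - g v\<bar> / \<bar>u - v\<bar> powr d |u v. u \<in> I \<and> v \<in> I \<and> u \<noteq> v}"
  then obtain u v where z: "z = \<bar>g u - g v\<bar> / \<bar>u - v\<bar> powr d" "u \<in> I" "v \<in> I" "u \<noteq> v"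
    by blast
  then show "z \<le> K" using assms(1)[OF z(2,3)] by (simp add: divide_le_eq)
qed (use assms(2-4) in blast)

lemma Lip_diff:
  assumes "u \<in> Lip d I" "v \<in> Lip d I"
  shows "(\<lambda>t. u t - v t) \<in> Lip d I"
proof (rule LipI)
  fix a c assume "a \<in> I" "c \<in> I"
  have "\<bar>(u a - v a) - (u c - v c)\<bar> \<le> \<bar>u a - u c\<bar> + \<bar>v a - v c\<bar>" by linarith
  also have "\<dots> \<le> (lip_const d I u + lip_const d I v) * \<bar>a - c\<bar> powr d"
    using lip_const_bound[OF assms(1) \<open>a \<in> I\<close> \<open>c \<in> I\<close>] lip_const_bound[OF assms(2) \<open>a \<in> I\<close> \<open>c \<in> I\<close>]
    by (simp add: distrib_right)
  finally show "\<bar>(u a - v a) - (u c - v c)\<bar> \<le> (lip_const d I u + lip_const d I v) * \<bar>a - c\<bar> powr d" .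
qed

definition holder_bounds :: "real \<Rightarrow> real set \<Rightarrow> (real \<Rightarrow> real) \<Rightarrow> real \<Rightarrow> real \<Rightarrow> bool" where
  "holder_bounds d I w S L \<longleftrightarrow>
     (\<forall>t\<in>I. \<bar>w t\<bar> \<le> S) \<and> (\<forall>u\<in>I. \<forall>v\<in>I. \<bar>w u - w v\<bar> \<le> L * \<bar>u - v\<bar> powr d)"

lemma holder_bounds_nonneg:
  assumes "holder_bounds d I w S L"
  shows "t \<in> I \<Longrightarrow> 0 \<le> S" and "u \<in> I \<Longrightarrow> v \<in> I \<Longrightarrow> u \<noteq> v \<Longrightarrow> 0 \<le> L"
proof -
  show "0 \<le> S" if "t \<in> I" using assms that unfolding holder_bounds_def by force
  show "0 \<le> L" if "u \<in> I" "v \<in> I" "u \<noteq> v"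
  proof -
    have "0 \<le> L * \<bar>u - v\<bar> powr d" using assms that unfolding holder_bounds_def
      by (meson abs_ge_zero order_trans)
    then show ?thesis using that by (simp add: zero_le_mult_iff)
  qed
qed

lemma holder_bounds_mono:
  "holder_bounds d I w S L \<Longrightarrow> S \<le> S' \<Longrightarrow> L \<le> L' \<Longrightarrow> holder_bounds d I w S' L'"
  unfolding holder_bounds_def by (meson mult_right_mono order_trans powr_ge_zero)

lemma holder_bounds_add:
  assumes "holder_bounds d I u S1 L1" "holder_bounds d I v S2 L2"
  shows "holder_bounds d I (\<lambda>t. u t + v t) (S1 + S2) (L1 + L2)"
  unfolding holder_bounds_def
proof (intro conjI ballI)
  fix t assume "t \<in> I"
  then show "\<bar>u t + v t\<bar> \<le> S1 + S2" using assms unfolding holder_bounds_def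
    by (smt (verit))
next
  fix a c assume "a \<in> I" "c \<in> I"
  have "\<bar>(u a + v a) - (u c + v c)\<bar> \<le> \<bar>u a - u c\<bar> + \<bar>v a - v c\<bar>" by linarith
  also have "\<dots> \<le> L1 * \<bar>a - c\<bar> powr d + L2 * \<bar>a - c\<bar> powr d"
    using assms \<open>a \<in> I\<close> \<open>c \<in> I\<close> unfolding holder_bounds_def by (meson add_mono)
  finally show "\<bar>(u a + v a) - (u c + v c)\<bar> \<le> (L1 + L2) * \<bar>a - c\<bar> powr d"
    by (simp add: distrib_right)
qed

lemma holder_bounds_minus:
  "holder_bounds d I (\<lambda>t. - w t) S L \<longleftrightarrow> holder_bounds d I w S L"
  unfolding holder_bounds_def by (simp add: abs_minus_commute)

lemma holder_bounds_limit:
  assumes lim: "\<And>t. t \<in> I \<Longrightarrow> (\<lambda>m. G m t) \<longlonglongrightarrow> g t"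
    and bounds: "\<forall>\<^sub>F m in sequentially. holder_bounds d I (G m) S L"
  shows "holder_bounds d I g S L"
  unfolding holder_bounds_def
proof (intro conjI ballI)
  fix t assume "t \<in> I"
  show "\<bar>g t\<bar> \<le> S"
    by (rule tendsto_upperbound[OF tendsto_rabs[OF lim[OF \<open>t \<in> I\<close>]]])
       (use bounds \<open>t \<in> I\<close> in \<open>auto simp: holder_bounds_def elim: eventually_mono\<close>)
next
  fix u v assume "u \<in> I" "v \<in> I"
  show "\<bar>g u - g v\<bar> \<le> L * \<bar>u - v\<bar> powr d"
    by (rule tendsto_upperbound[OF tendsto_rabs[OF tendsto_diff[OF lim[OF \<open>u \<in> I\<close>] lim[OF \<open>v \<in> I\<close>]]]])
       (use bounds \<open>u \<in> I\<close> \<open>v \<in> I\<close> in \<open>auto simp: holder_bounds_def elim: eventually_mono\<close>)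
qed

lemma holder_bounds_imp_Lip: "holder_bounds d I w S L \<Longrightarrow> w \<in> Lip d I"
  unfolding holder_bounds_def by (rule LipI) auto

lemma sup_norm_le:
  "holder_bounds d I w S L \<Longrightarrow> I \<noteq> {} \<Longrightarrow> sup_norm I w \<le> S"
  unfolding sup_norm_def holder_bounds_def by (rule cSup_least) auto

lemma lip_const_le:
  "holder_bounds d {p..q} w S L \<Longrightarrow> p < q \<Longrightarrow> lip_const d {p..q} w \<le> L"
  unfolding holder_bounds_def by (rule lip_const_least[of _ _ _ _ p q]) auto

lemma holder_bounds_Lip:
  assumes w: "w \<in> Lip d {p..q}" and "p \<le> q" "0 < d"
  shows "holder_bounds d {p..q} w (sup_norm {p..q} w) (lip_const d {p..q} w)"
proof -
  let ?K = "\<bar>w p\<bar> + \<bar>lip_const d {p..q} w\<bar> * (q - p) powr d"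
  have "\<bar>w u\<bar> \<le> ?K" if "u \<in> {p..q}" for u
  proof -
    have "\<bar>w u - w p\<bar> \<le> \<bar>lip_const d {p..q} w\<bar> * \<bar>u - p\<bar> powr d"
      using lip_const_bound[OF w that, of p] \<open>p \<le> q\<close>
      by (auto intro: order_trans[OF _ mult_right_mono])
    also have "\<dots> \<le> \<bar>lip_const d {p..q} w\<bar> * (q - p) powr d"
      by (rule mult_left_mono) (use that assms in \<open>auto intro!: powr_mono2\<close>)
    finally show ?thesis by linarith
  qed
  then have "bdd_above ((\<lambda>u. \<bar>w u\<bar>) ` {p..q})"
    unfolding bdd_above_def by (intro exI[of _ ?K]) auto
  then show ?thesis
    unfolding holder_bounds_def sup_norm_def using lip_const_bound[OF w] by (auto intro: cSup_upper)
qed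

lemma
  assumes "w \<in> Lip d {p..q}" "p < q" "0 < d"
  shows sup_norm_nonneg: "0 \<le> sup_norm {p..q} w"
    and lip_const_nonneg: "0 \<le> lip_const d {p..q} w"
proof -
  note bounds = holder_bounds_Lip[OF assms(1) _ assms(3)]
  show "0 \<le> sup_norm {p..q} w" using holder_bounds_nonneg(1)[OF bounds, of p] assms(2) by auto
  show "0 \<le> lip_const d {p..q} w" using holder_bounds_nonneg(2)[OF bounds, of p q] assms(2) by auto
qed

lemma lip_norm_le:
  "holder_bounds d {p..q} w E E \<Longrightarrow> p < q \<Longrightarrow> lip_norm d {p..q} w \<le> E"
  unfolding lip_norm_def using sup_norm_le lip_const_le by fastforce

lemma abs_le_lip_norm:
  assumes "w \<in> Lip d {p..q}" "0 < d" "t \<in> {p..q}"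
  shows "\<bar>w t\<bar> \<le> lip_norm d {p..q} w"
  using holder_bounds_Lip[OF assms(1) _ assms(2)] assms(3)
  by (auto simp: holder_bounds_def lip_norm_def intro: le_max_iff_disj[THEN iffD2])

lemma tendsto_of_lip_norm_tendsto:
  assumes "\<And>r. (\<lambda>t. G r t - g t) \<in> Lip d {p..q}" "0 < d" "t \<in> {p..q}"
    and "(\<lambda>r. lip_norm d {p..q} (\<lambda>t. G r t - g t)) \<longlonglongrightarrow> 0"
  shows "(\<lambda>r. G r t) \<longlonglongrightarrow> g t"
proof -
  have "(\<lambda>r. G r t - g t) \<longlonglongrightarrow> 0"
    by (rule Lim_null_comparison[OF _ assms(4)]) (use abs_le_lip_norm[OF assms(1-3)] in simp)
  then show ?thesis by (rule LIM_zero_cancel)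
qed

(* The weight 2 on the sup norm is what makes all T^{alpha_r} contractions with one common
   constant (T_contraction_adapted); for lip_norm the constants 2 alpha_ratio r may tend to 1. *)
definition adapted_norm :: "real \<Rightarrow> real set \<Rightarrow> (real \<Rightarrow> real) \<Rightarrow> real" where
  "adapted_norm d I w = lip_const d I w + 2 * sup_norm I w"

lemma holder_bounds_adapted_norm:
  assumes "w \<in> Lip d {p..q}" "p < q" "0 < d"
  shows "holder_bounds d {p..q} w (adapted_norm d {p..q} w) (adapted_norm d {p..q} w)"
  by (rule holder_bounds_mono[OF holder_bounds_Lip])
     (use assms sup_norm_nonneg[OF assms] lip_const_nonneg[OF assms] in \<open>auto simp: adapted_norm_def\<close>)

lemma
  assumes "w \<in> Lip d {p..q}" "p < q" "0 < d"
  shows lip_norm_nonneg: "0 \<le> lip_norm d {p..q} w"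
    and adapted_norm_nonneg: "0 \<le> adapted_norm d {p..q} w"
  using sup_norm_nonneg[OF assms] lip_const_nonneg[OF assms] by (auto simp: lip_norm_def adapted_norm_def)

lemma adapted_norm_le:
  "holder_bounds d {p..q} w S L \<Longrightarrow> p < q \<Longrightarrow> adapted_norm d {p..q} w \<le> L + 2 * S"
  unfolding adapted_norm_def using sup_norm_le lip_const_le by fastforce

lemma adapted_norm_le_lip_norm: "adapted_norm d I w \<le> 3 * lip_norm d I w"
  unfolding adapted_norm_def lip_norm_def by linarith

lemma adapted_norm_diff_le:
  assumes "u \<in> Lip d {p..q}" "v \<in> Lip d {p..q}" "p < q" "0 < d"
  shows "adapted_norm d {p..q} (\<lambda>t. u t - v t) \<le> adapted_norm d {p..q} u + adapted_norm d {p..q} v"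
proof -
  have "holder_bounds d {p..q} (\<lambda>t. u t + - v t)
          (sup_norm {p..q} u + sup_norm {p..q} v) (lip_const d {p..q} u + lip_const d {p..q} v)"
    using assms by (intro holder_bounds_add)
      (auto simp: holder_bounds_minus intro: holder_bounds_Lip)
  from adapted_norm_le[OF this assms(3)] show ?thesis by (simp add: adapted_norm_def)
qed

lemma holder_bounds_geometric_limit:
  fixes G :: "nat \<Rightarrow> real \<Rightarrow> real" and \<theta> C :: real
  assumes \<theta>: "0 \<le> \<theta>" "\<theta> < 1" and C: "0 \<le> C"
    and step: "\<And>r. holder_bounds d I (\<lambda>t. G r t - G (Suc r) t) (C * \<theta> ^ r) (C * \<theta> ^ r)"
  obtains g where "\<And>t. t \<in> I \<Longrightarrow> (\<lambda>r. G r t) \<longlonglongrightarrow> g t"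
    and "\<And>r. holder_bounds d I (\<lambda>t. G r t - g t) (C * \<theta> ^ r / (1 - \<theta>)) (C * \<theta> ^ r / (1 - \<theta>))"
proof -
  define E where "E r = C * \<theta> ^ r / (1 - \<theta>)" for r
  have tail_exact: "holder_bounds d I (\<lambda>t. G r t - G m t) (C * (\<theta> ^ r - \<theta> ^ m) / (1 - \<theta>))
          (C * (\<theta> ^ r - \<theta> ^ m) / (1 - \<theta>))" if "r \<le> m" for r m
    using that
  proof (induction m rule: dec_induct)
    case (step m)
    have "C * (\<theta> ^ r - \<theta> ^ m) / (1 - \<theta>) + C * \<theta> ^ m = C * (\<theta> ^ r - \<theta> ^ Suc m) / (1 - \<theta>)"
      using \<theta> by (simp add: field_simps)
    then show ?case
      using holder_bounds_add[OF step.IH assms(4)[of m]] by simp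
  qed (simp add: holder_bounds_def)
  have tail: "holder_bounds d I (\<lambda>t. G r t - G m t) (E r) (E r)" if "r \<le> m" for r m
    by (rule holder_bounds_mono[OF tail_exact[OF that]])
      (use \<theta> C in \<open>auto simp: E_def intro!: divide_right_mono mult_left_mono\<close>)
  have E_0: "E \<longlonglongrightarrow> 0"
    unfolding E_def using \<theta> by (auto intro!: tendsto_eq_intros LIMSEQ_power_zero)
  have "Cauchy (\<lambda>r. G r t)" if "t \<in> I" for t
  proof (rule metric_CauchyI)
    fix e :: real assume "0 < e"
    then obtain M where M: "\<And>n. n \<ge> M \<Longrightarrow> E n < e"
      using LIMSEQ_D[OF E_0] by fastforce
    have "dist (G m t) (G n t) < e" if "m \<ge> M" "n \<ge> M" for m n
      using tail[of m n] tail[of n m] M[OF \<open>m \<ge> M\<close>] M[OF \<open>n \<ge> M\<close>] \<open>t \<in> I\<close>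
      by (cases "m \<le> n") (auto simp: holder_bounds_def dist_real_def abs_minus_commute)
    then show "\<exists>M. \<forall>m\<ge>M. \<forall>n\<ge>M. dist (G m t) (G n t) < e" by blast
  qed
  then have lim: "(\<lambda>r. G r t) \<longlonglongrightarrow> lim (\<lambda>r. G r t)" if "t \<in> I" for t
    using that by (simp add: Cauchy_convergent_iff convergent_LIMSEQ_iff)
  moreover have "holder_bounds d I (\<lambda>t. G r t - lim (\<lambda>r. G r t)) (E r) (E r)" for r
    by (rule holder_bounds_limit[where G = "\<lambda>m t. G r t - G m t"])
       (auto intro: tendsto_diff lim eventually_sequentiallyI tail)
  ultimately show ?thesis by (intro that[of "\<lambda>t. lim (\<lambda>r. G r t)"]) (auto simp: E_def)
qed

section \<open>The partition and the maps Q_i\<close>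

locale interval_partition =
  fixes x :: "nat \<Rightarrow> real" and N :: nat
  assumes N_ge_1: "N \<ge> 1" and x_less_Suc: "\<And>i. i < N \<Longrightarrow> x i < x (Suc i)"
begin

lemma x_less: "i < j \<Longrightarrow> j \<le> N \<Longrightarrow> x i < x j"
proof (induction j)
  case (Suc j)
  then show ?case using x_less_Suc[of j] by (cases "i = j") auto
qed simp

lemma x_le: "i \<le> j \<Longrightarrow> j \<le> N \<Longrightarrow> x i \<le> x j"
  using x_less[of i j] by (cases "i = j") auto

lemma x_0_less_N: "x 0 < x N"
  using x_less[of 0 N] N_ge_1 by simp

lemma piece_subset: "1 \<le> i \<Longrightarrow> i \<le> N \<Longrightarrow> {x (i - 1)..x i} \<subseteq> {x 0..x N}"
  using x_le[of 0 "i - 1"] x_le[of i N] by auto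

lemma aa_pos: "1 \<le> i \<Longrightarrow> i \<le> N \<Longrightarrow> 0 < aa x N i"
  unfolding aa_def using x_less[of "i - 1" i] x_0_less_N by simp

lemma aa_le_1:
  assumes "1 \<le> i" "i \<le> N"
  shows "aa x N i \<le> 1"
proof -
  have "x 0 \<le> x (i - 1)" "x i \<le> x N" using x_le assms by auto
  then show ?thesis unfolding aa_def using x_0_less_N by (simp add: divide_le_eq)
qed

lemma aa_powr_le_1:
  assumes "1 \<le> i" "i \<le> N" "0 \<le> d"
  shows "aa x N i powr d \<le> 1"
  using powr_mono2[OF assms(3) less_imp_le[OF aa_pos] aa_le_1] assms by simp

lemma QQ_eq:
  assumes "1 \<le> i" "i \<le> N"
  shows "QQ x N i t = x 0 + (t - x (i - 1)) / aa x N i"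
proof -
  have "(x N * x (i - 1) - x 0 * x i) / (x N - x 0) = x (i - 1) - aa x N i * x 0"
    using x_0_less_N by (simp add: aa_def field_simps)
  then show ?thesis unfolding QQ_def using aa_pos[OF assms] by (simp add: field_simps)
qed

lemma QQ_diff: "1 \<le> i \<Longrightarrow> i \<le> N \<Longrightarrow> QQ x N i u - QQ x N i v = (u - v) / aa x N i"
  by (simp add: QQ_eq diff_divide_distrib)

lemma QQ_left: "1 \<le> i \<Longrightarrow> i \<le> N \<Longrightarrow> QQ x N i (x (i - 1)) = x 0"
  by (simp add: QQ_eq)

lemma QQ_right: "1 \<le> i \<Longrightarrow> i \<le> N \<Longrightarrow> QQ x N i (x i) = x N"
  using x_less[of "i - 1" i] x_0_less_N by (simp add: QQ_eq aa_def)

lemma QQ_in_interval: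
  assumes "1 \<le> i" "i \<le> N" "t \<in> {x (i - 1)..x i}"
  shows "QQ x N i t \<in> {x 0..x N}"
proof -
  have "0 \<le> (t - x (i - 1)) / aa x N i" "0 \<le> (x i - t) / aa x N i"
    using assms(3) aa_pos[OF assms(1,2)] by auto
  then show ?thesis
    using QQ_diff[OF assms(1,2), of t "x (i - 1)"] QQ_diff[OF assms(1,2), of "x i" t]
      QQ_left[OF assms(1,2)] QQ_right[OF assms(1,2)] by auto
qed

lemma aa_powr_mult_QQ_diff:
  assumes "1 \<le> i" "i \<le> N"
  shows "aa x N i powr d * \<bar>QQ x N i u - QQ x N i v\<bar> powr d = \<bar>u - v\<bar> powr d"
  using aa_pos[OF assms]
  by (simp add: QQ_diff[OF assms] abs_div powr_mult[symmetric])

lemma least_piece: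
  assumes "t \<in> {x 0..x N}"
  defines "k \<equiv> LEAST i. 1 \<le> i \<and> t \<le> x i"
  shows "1 \<le> k" "k \<le> N" "t \<in> {x (k - 1)..x k}"
proof -
  have ex: "1 \<le> N \<and> t \<le> x N" using assms N_ge_1 by auto
  have k: "1 \<le> k \<and> t \<le> x k" unfolding k_def by (rule LeastI[of _ N]) (rule ex)
  have "k \<le> N" unfolding k_def by (rule Least_le) (rule ex)
  moreover have "x (k - 1) \<le> t"
  proof (cases "k = 1")
    case False
    then have "\<not> (1 \<le> k - 1 \<and> t \<le> x (k - 1))"
      using k not_less_Least[of "k - 1" "\<lambda>i. 1 \<le> i \<and> t \<le> x i"] unfolding k_def by simp
    then show ?thesis using k False by auto
  qed (use assms in simp)
  ultimately show "1 \<le> k" "k \<le> N" "t \<in> {x (k - 1)..x k}" using k by auto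
qed

lemma piece_exists:
  assumes "t \<in> {x 0..x N}"
  obtains i where "1 \<le> i" "i \<le> N" "t \<in> {x (i - 1)..x i}"
  using least_piece[OF assms] by blast

(* At a node shared by two pieces the two formulas agree: Q maps the node to x N from the left
   piece and to x 0 from the right one, where g and B coincide. *)
lemma Tmap_on_piece:
  assumes g_0: "g (x 0) = B (x 0)" and g_N: "g (x N) = B (x N)"
    and i: "1 \<le> i" "i \<le> N" and t: "t \<in> {x (i - 1)..x i}"
  shows "Tmap x N f A B g t
           = f t + A i (QQ x N i t) * g (QQ x N i t) - A i (QQ x N i t) * B (QQ x N i t)"
proof -
  define k where "k = (LEAST i. 1 \<le> i \<and> t \<le> x i)"
  have tI: "t \<in> {x 0..x N}" using piece_subset[OF i] t by blast
  note k = least_piece[OF tI, folded k_def]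
  have "k \<le> i" unfolding k_def by (rule Least_le) (use i t in auto)
  have T: "Tmap x N f A B g t
             = f t + A k (QQ x N k t) * g (QQ x N k t) - A k (QQ x N k t) * B (QQ x N k t)"
    unfolding Tmap_def k_def[symmetric] Let_def ..
  show ?thesis
  proof (cases "k = i")
    case False
    with \<open>k \<le> i\<close> have "x k \<le> x (i - 1)" using x_le[of k "i - 1"] i by simp
    then have "t = x k" "t = x (i - 1)" using k(3) t by auto
    then have "QQ x N k t = x N" "QQ x N i t = x 0" using QQ_right[OF k(1,2)] QQ_left[OF i] by auto
    then show ?thesis using T g_0 g_N by simp
  qed (use T in simp)
qed

(* D is the shape of T g - T h on each piece, with w = g - h. *)
context
  fixes d \<epsilon> S L :: real and A :: "nat \<Rightarrow> real \<Rightarrow> real" and w D :: "real \<Rightarrow> real"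
  assumes d: "0 < d" "d \<le> 1" and \<epsilon>: "0 \<le> \<epsilon>"
    and A: "\<And>i. 1 \<le> i \<Longrightarrow> i \<le> N \<Longrightarrow>
              holder_bounds d {x 0..x N} (A i) (\<epsilon> * aa x N i powr d) (\<epsilon> * aa x N i powr d)"
    and w: "holder_bounds d {x 0..x N} w S L" and w_0: "w (x 0) = 0" and w_N: "w (x N) = 0"
    and D: "\<And>i t. 1 \<le> i \<Longrightarrow> i \<le> N \<Longrightarrow> t \<in> {x (i - 1)..x i} \<Longrightarrow>
              D t = A i (QQ x N i t) * w (QQ x N i t)"
begin

lemma rescaled_product_nonneg: "0 \<le> S" "0 \<le> L"
  using holder_bounds_nonneg(1)[OF w, of "x 0"] holder_bounds_nonneg(2)[OF w, of "x 0" "x N"]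
    x_0_less_N by auto

lemma rescaled_product_abs_le:
  assumes "t \<in> {x 0..x N}"
  shows "\<bar>D t\<bar> \<le> \<epsilon> * S"
proof -
  obtain i where i: "1 \<le> i" "i \<le> N" "t \<in> {x (i - 1)..x i}" using piece_exists[OF assms] .
  have s: "QQ x N i t \<in> {x 0..x N}" by (rule QQ_in_interval[OF i])
  have "\<bar>D t\<bar> = \<bar>A i (QQ x N i t)\<bar> * \<bar>w (QQ x N i t)\<bar>" using D[OF i] by (simp add: abs_mult)
  also have "\<dots> \<le> (\<epsilon> * aa x N i powr d) * S"
    using A[OF i(1,2)] w s \<epsilon> by (intro mult_mono) (auto simp: holder_bounds_def)
  also have "\<dots> \<le> \<epsilon> * S"
    using aa_powr_le_1[OF i(1,2)] d \<epsilon> rescaled_product_nonneg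
    by (simp add: mult.assoc mult_left_le_one_le mult_left_mono)
  finally show ?thesis .
qed

lemma rescaled_product_abs_le_zero:
  assumes i: "1 \<le> i" "i \<le> N" and t: "t \<in> {x (i - 1)..x i}" and t0: "t0 \<in> {x (i - 1)..x i}"
    and zero: "w (QQ x N i t0) = 0"
  shows "\<bar>D t\<bar> \<le> \<epsilon> * L * \<bar>t - t0\<bar> powr d"
proof -
  have s: "QQ x N i t \<in> {x 0..x N}" "QQ x N i t0 \<in> {x 0..x N}"
    using QQ_in_interval[OF i] t t0 by auto
  have "\<bar>D t\<bar> = \<bar>A i (QQ x N i t)\<bar> * \<bar>w (QQ x N i t) - w (QQ x N i t0)\<bar>"
    using D[OF i t] zero by (simp add: abs_mult)
  also have "\<dots> \<le> (\<epsilon> * aa x N i powr d) * (L * \<bar>QQ x N i t - QQ x N i t0\<bar> powr d)"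
    using A[OF i] w s \<epsilon> by (intro mult_mono) (auto simp: holder_bounds_def)
  also have "\<dots> = \<epsilon> * L * \<bar>t - t0\<bar> powr d"
    using aa_powr_mult_QQ_diff[OF i, of d t t0] by (simp add: algebra_simps)
  finally show ?thesis .
qed

lemma rescaled_product_diff_same_piece:
  assumes i: "1 \<le> i" "i \<le> N" and u: "u \<in> {x (i - 1)..x i}" and v: "v \<in> {x (i - 1)..x i}"
  shows "\<bar>D u - D v\<bar> \<le> \<epsilon> * (L + S) * \<bar>u - v\<bar> powr d"
proof -
  define s s' where "s = QQ x N i u" and "s' = QQ x N i v"
  have s: "s \<in> {x 0..x N}" "s' \<in> {x 0..x N}"
    unfolding s_def s'_def using QQ_in_interval[OF i] u v by auto
  have "\<bar>D u - D v\<bar> = \<bar>A i s * (w s - w s') + w s' * (A i s - A i s')\<bar>"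
    using D[OF i u] D[OF i v] unfolding s_def s'_def by (simp add: algebra_simps)
  also have "\<dots> \<le> \<bar>A i s\<bar> * \<bar>w s - w s'\<bar> + \<bar>w s'\<bar> * \<bar>A i s - A i s'\<bar>"
    by (metis abs_mult abs_triangle_ineq)
  also have "\<dots> \<le> (\<epsilon> * aa x N i powr d) * (L * \<bar>s - s'\<bar> powr d)
                  + S * (\<epsilon> * aa x N i powr d * \<bar>s - s'\<bar> powr d)"
    using A[OF i] w s \<epsilon> rescaled_product_nonneg
    by (intro add_mono mult_mono) (auto simp: holder_bounds_def)
  also have "\<dots> = \<epsilon> * (L + S) * \<bar>u - v\<bar> powr d"
    using aa_powr_mult_QQ_diff[OF i, of d u v] unfolding s_def s'_def by (simp add: algebra_simps)
  finally show ?thesis .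
qed

lemma rescaled_product_diff_distinct_pieces:
  assumes i: "1 \<le> i" and ij: "i < j" and j: "j \<le> N"
    and u: "u \<in> {x (i - 1)..x i}" and v: "v \<in> {x (j - 1)..x j}"
  shows "\<bar>D u - D v\<bar> \<le> \<epsilon> * (2 powr (1 - d) * L) * \<bar>u - v\<bar> powr d"
proof -
  have "x i \<le> x (j - 1)" using x_le[of i "j - 1"] ij j by simp
  then have gaps: "0 \<le> x i - u" "0 \<le> v - x (j - 1)" "(x i - u) + (v - x (j - 1)) \<le> \<bar>u - v\<bar>"
    using u v by auto
  have "\<bar>D u - D v\<bar> \<le> \<bar>D u\<bar> + \<bar>D v\<bar>" by linarith
  also have "\<dots> \<le> \<epsilon> * L * (x i - u) powr d + \<epsilon> * L * (v - x (j - 1)) powr d"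
    using rescaled_product_abs_le_zero[OF i _ u, of "x i"] rescaled_product_abs_le_zero[OF _ j v, of "x (j - 1)"]
      QQ_right[of i] QQ_left[of j] w_0 w_N x_le[of "i - 1" i] x_le[of "j - 1" j] u v i ij j
    by (intro add_mono) auto
  also have "\<dots> \<le> \<epsilon> * L * (2 powr (1 - d) * ((x i - u) + (v - x (j - 1))) powr d)"
    using powr_add_le_two_powr[OF gaps(1,2) d] \<epsilon> rescaled_product_nonneg
    by (simp add: distrib_left[symmetric] mult_left_mono)
  also have "\<dots> \<le> \<epsilon> * L * (2 powr (1 - d) * \<bar>u - v\<bar> powr d)"
    using gaps d \<epsilon> rescaled_product_nonneg by (intro mult_left_mono powr_mono2) auto
  finally show ?thesis by (simp add: mult_ac)
qed

lemma rescaled_product_holder_bounds: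
  "holder_bounds d {x 0..x N} D (\<epsilon> * S) (\<epsilon> * max (L + S) (2 powr (1 - d) * L))"
proof -
  have ordered: "\<bar>D u - D v\<bar> \<le> \<epsilon> * max (L + S) (2 powr (1 - d) * L) * \<bar>u - v\<bar> powr d"
    if u: "u \<in> {x 0..x N}" and v: "v \<in> {x 0..x N}" and "u < v" for u v
  proof -
    obtain i where i: "1 \<le> i" "i \<le> N" "u \<in> {x (i - 1)..x i}" using piece_exists[OF u] .
    obtain j where j: "1 \<le> j" "j \<le> N" "v \<in> {x (j - 1)..x j}" using piece_exists[OF v] .
    have "i \<le> j"
    proof (rule ccontr)
      assume "\<not> i \<le> j"
      then have "x j \<le> x (i - 1)" using x_le i by simp
      then show False using i(3) j(3) \<open>u < v\<close> by simp
    qed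
    have weaken: "\<bar>D u - D v\<bar> \<le> \<epsilon> * max (L + S) (2 powr (1 - d) * L) * \<bar>u - v\<bar> powr d"
      if "c \<le> max (L + S) (2 powr (1 - d) * L)" "\<bar>D u - D v\<bar> \<le> \<epsilon> * c * \<bar>u - v\<bar> powr d" for c
      using that(2) by (rule order_trans) (intro mult_right_mono mult_left_mono that(1) \<epsilon>; simp)
    consider "i = j" | "i < j" using \<open>i \<le> j\<close> by linarith
    then show ?thesis
    proof cases
      case 1
      with j(3) show ?thesis
        by (intro weaken[OF _ rescaled_product_diff_same_piece[OF i(1,2,3)]]) simp_all
    next
      case 2
      show ?thesis
        by (rule weaken[OF _ rescaled_product_diff_distinct_pieces[OF i(1) 2 j(2) i(3) j(3)]]) simp
    qed
  qed
  have "\<bar>D u - D v\<bar> \<le> \<epsilon> * max (L + S) (2 powr (1 - d) * L) * \<bar>u - v\<bar> powr d"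
    if "u \<in> {x 0..x N}" "v \<in> {x 0..x N}" for u v
    using ordered[OF that] ordered[OF that(2,1)]
    by (cases u v rule: linorder_cases) (auto simp: abs_minus_commute)
  with rescaled_product_abs_le show ?thesis unfolding holder_bounds_def by blast
qed

end

end

section \<open>The operators T^alpha_r and their compositions\<close>

locale nonstationary_fif = interval_partition x N
  for x :: "nat \<Rightarrow> real" and N :: nat +
  fixes d :: real and f :: "real \<Rightarrow> real" and b :: "nat \<Rightarrow> real \<Rightarrow> real"
    and alpha :: "nat \<Rightarrow> nat \<Rightarrow> real \<Rightarrow> real"
  assumes d: "0 < d" "d \<le> 1"
    and f: "f \<in> Lip d {x 0..x N}"
    and b: "\<And>r. r \<ge> 1 \<Longrightarrow> b r \<in> Lip_f d (x 0) (x N) f"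
    and b_bdd: "bdd_above {lip_norm d {x 0..x N} (b r) | r. r \<ge> 1}"
    and alpha: "\<And>i r. 1 \<le> i \<Longrightarrow> i \<le> N \<Longrightarrow> r \<ge> 1 \<Longrightarrow> alpha i r \<in> Lip d {x 0..x N}"
    and alpha_small: "\<And>i r. 1 \<le> i \<Longrightarrow> i \<le> N \<Longrightarrow> r \<ge> 1 \<Longrightarrow>
           lip_norm d {x 0..x N} (alpha i r) / aa x N i powr d < 1/2"
begin

abbreviation "I \<equiv> {x 0..x N}"
abbreviation "LF \<equiv> Lip_f d (x 0) (x N) f"
abbreviation "T r \<equiv> Tmap x N f (\<lambda>i. alpha i r) (b r)"

definition alpha_ratio :: "nat \<Rightarrow> real" where
  "alpha_ratio r = Max ((\<lambda>i. lip_norm d I (alpha i r) / aa x N i powr d) ` {1..N})"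

lemma
  assumes "r \<ge> 1"
  shows alpha_ratio_nonneg: "0 \<le> alpha_ratio r"
    and alpha_ratio_less_half: "alpha_ratio r < 1/2"
    and lip_norm_alpha_le: "\<And>i. 1 \<le> i \<Longrightarrow> i \<le> N \<Longrightarrow> lip_norm d I (alpha i r) \<le> alpha_ratio r * aa x N i powr d"
proof -
  let ?R = "(\<lambda>i. lip_norm d I (alpha i r) / aa x N i powr d) ` {1..N}"
  have R: "finite ?R" "?R \<noteq> {}" using N_ge_1 by auto
  have le: "lip_norm d I (alpha i r) / aa x N i powr d \<le> alpha_ratio r" if "1 \<le> i" "i \<le> N" for i
    unfolding alpha_ratio_def by (rule Max_ge[OF R(1)]) (use that in auto)
  have "0 \<le> lip_norm d I (alpha 1 r)"
    using sup_norm_nonneg[OF alpha[OF _ N_ge_1 assms] x_0_less_N d(1)] by (simp add: lip_norm_def)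
  then have "0 \<le> lip_norm d I (alpha 1 r) / aa x N 1 powr d" by simp
  then show "0 \<le> alpha_ratio r" using le[of 1] N_ge_1 by linarith
  show "alpha_ratio r < 1/2" unfolding alpha_ratio_def Max_less_iff[OF R] using alpha_small assms by auto
  show "lip_norm d I (alpha i r) \<le> alpha_ratio r * aa x N i powr d" if "1 \<le> i" "i \<le> N" for i
    using le[OF that] aa_pos[OF that] by (simp add: divide_le_eq)
qed

lemma holder_bounds_alpha:
  assumes "r \<ge> 1" "1 \<le> i" "i \<le> N"
  shows "holder_bounds d I (alpha i r) (alpha_ratio r * aa x N i powr d) (alpha_ratio r * aa x N i powr d)"
  by (rule holder_bounds_mono[OF holder_bounds_Lip[OF alpha[OF assms(2,3,1)] less_imp_le[OF x_0_less_N] d(1)]])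
     (use lip_norm_alpha_le[OF assms] in \<open>auto simp: lip_norm_def\<close>)

lemma T_b: "T r (b r) = f"
  by (simp add: Tmap_def Let_def fun_eq_iff)

lemma T_on_piece:
  assumes "r \<ge> 1" "g \<in> LF" "1 \<le> i" "i \<le> N" "t \<in> {x (i - 1)..x i}"
  shows "T r g t = f t + alpha i r (QQ x N i t) * g (QQ x N i t) - alpha i r (QQ x N i t) * b r (QQ x N i t)"
  using Tmap_on_piece[OF _ _ assms(3-5)] assms(2) b[OF assms(1)] by (simp add: Lip_f_def)

lemma T_diff_holder_bounds:
  assumes r: "r \<ge> 1" and g: "g \<in> LF" and h: "h \<in> LF"
  defines "S \<equiv> sup_norm I (\<lambda>t. g t - h t)" and "L \<equiv> lip_const d I (\<lambda>t. g t - h t)"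
  shows "holder_bounds d I (\<lambda>t. T r g t - T r h t)
           (alpha_ratio r * S) (alpha_ratio r * max (L + S) (2 powr (1 - d) * L))"
proof (rule rescaled_product_holder_bounds[OF d alpha_ratio_nonneg[OF r] holder_bounds_alpha[OF r]])
  show "holder_bounds d I (\<lambda>t. g t - h t) S L"
    unfolding S_def L_def using g h x_0_less_N d
    by (intro holder_bounds_Lip Lip_diff) (auto simp: Lip_f_def)
  show "g (x 0) - h (x 0) = 0" "g (x N) - h (x N) = 0" using g h by (auto simp: Lip_f_def)
  show "T r g t - T r h t = alpha i r (QQ x N i t) * (g (QQ x N i t) - h (QQ x N i t))"
    if "1 \<le> i" "i \<le> N" "t \<in> {x (i - 1)..x i}" for i t
    using T_on_piece[OF r g that] T_on_piece[OF r h that] by (simp add: algebra_simps)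
qed

lemma T_in_Lip_f:
  assumes r: "r \<ge> 1" and g: "g \<in> LF"
  shows "T r g \<in> LF"
proof -
  have "(\<lambda>t. T r (b r) t - T r g t) \<in> Lip d I"
    by (rule holder_bounds_imp_Lip[OF T_diff_holder_bounds[OF r b[OF r] g]])
  then have "(\<lambda>t. f t - (T r (b r) t - T r g t)) \<in> Lip d I" by (rule Lip_diff[OF f])
  moreover have "T r g (x 0) = f (x 0)" "T r g (x N) = f (x N)"
    using T_on_piece[OF r g, of 1 "x 0"] T_on_piece[OF r g, of N "x N"] g b[OF r] N_ge_1
      x_le[of 0 1] x_le[of "N - 1" N] QQ_left[of 1] QQ_right[of N]
    by (auto simp: Lip_f_def)
  ultimately show ?thesis by (simp add: Lip_f_def T_b)
qed

lemma T_contraction: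
  assumes r: "r \<ge> 1" and g: "g \<in> LF" and h: "h \<in> LF"
  shows "lip_norm d I (\<lambda>t. T r g t - T r h t) \<le> 2 * alpha_ratio r * lip_norm d I (\<lambda>t. g t - h t)"
proof -
  define S L M where "S = sup_norm I (\<lambda>t. g t - h t)" and "L = lip_const d I (\<lambda>t. g t - h t)"
    and "M = lip_norm d I (\<lambda>t. g t - h t)"
  have gh: "(\<lambda>t. g t - h t) \<in> Lip d I" using g h by (intro Lip_diff) (auto simp: Lip_f_def)
  have SLM: "0 \<le> S" "0 \<le> L" "S \<le> M" "L \<le> M"
    using sup_norm_nonneg[OF gh x_0_less_N d(1)] lip_const_nonneg[OF gh x_0_less_N d(1)]
    unfolding S_def L_def M_def lip_norm_def by auto
  have "2 powr (1 - d) \<le> 2 powr 1" using d by (intro powr_mono) auto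
  then have "max (L + S) (2 powr (1 - d) * L) \<le> 2 * M"
    using SLM mult_right_mono[of "2 powr (1 - d)" 2 L] by auto
  then have "alpha_ratio r * max (L + S) (2 powr (1 - d) * L) \<le> alpha_ratio r * (2 * M)"
    and "alpha_ratio r * S \<le> alpha_ratio r * (2 * M)"
    using alpha_ratio_nonneg[OF r] SLM by (auto intro: mult_left_mono)
  then have "holder_bounds d I (\<lambda>t. T r g t - T r h t) (2 * alpha_ratio r * M) (2 * alpha_ratio r * M)"
    using T_diff_holder_bounds[OF r g h, folded S_def L_def]
    by (elim holder_bounds_mono) (simp_all add: mult_ac)
  then show ?thesis unfolding M_def by (rule lip_norm_le[OF _ x_0_less_N])
qed

definition contraction_const :: real where
  "contraction_const = max (3/4) (2 powr - d)"

lemma contraction_const_bounds: "1/2 \<le> contraction_const" "contraction_const < 1"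
proof -
  have "2 powr - d < 2 powr 0" using d by (intro powr_less_mono) auto
  then show "1/2 \<le> contraction_const" "contraction_const < 1" by (auto simp: contraction_const_def)
qed

lemma half_max_le_contraction_const:
  assumes "0 \<le> S" "0 \<le> L"
  shows "1/2 * max (L + S) (2 powr (1 - d) * L) + S \<le> contraction_const * (L + 2 * S)"
proof -
  have "1/2 * (L + S) + S \<le> 3/4 * (L + 2 * S)" using assms by simp
  also have "\<dots> \<le> contraction_const * (L + 2 * S)"
    using assms by (intro mult_right_mono) (auto simp: contraction_const_def)
  finally have left: "1/2 * (L + S) + S \<le> contraction_const * (L + 2 * S)" .
  have "1/2 * (2 powr (1 - d) * L) + S = 2 powr - d * L + S"
    by (simp add: powr_diff powr_minus_divide)
  also have "\<dots> \<le> contraction_const * L + contraction_const * (2 * S)"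
  proof (rule add_mono)
    show "2 powr - d * L \<le> contraction_const * L"
      using assms by (intro mult_right_mono) (auto simp: contraction_const_def)
    show "S \<le> contraction_const * (2 * S)"
      using mult_right_mono[OF contraction_const_bounds(1), of "2 * S"] assms by simp
  qed
  finally have right: "1/2 * (2 powr (1 - d) * L) + S \<le> contraction_const * (L + 2 * S)"
    by (simp add: distrib_left)
  from left right show ?thesis unfolding max_def by simp
qed

lemma T_contraction_adapted:
  assumes r: "r \<ge> 1" and g: "g \<in> LF" and h: "h \<in> LF"
  shows "adapted_norm d I (\<lambda>t. T r g t - T r h t) \<le> contraction_const * adapted_norm d I (\<lambda>t. g t - h t)"
proof -
  define S L where "S = sup_norm I (\<lambda>t. g t - h t)" and "L = lip_const d I (\<lambda>t. g t - h t)"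
  have gh: "(\<lambda>t. g t - h t) \<in> Lip d I" using g h by (intro Lip_diff) (auto simp: Lip_f_def)
  have SL: "0 \<le> S" "0 \<le> L"
    using sup_norm_nonneg[OF gh x_0_less_N d(1)] lip_const_nonneg[OF gh x_0_less_N d(1)]
    unfolding S_def L_def by auto
  have "adapted_norm d I (\<lambda>t. T r g t - T r h t)
          \<le> alpha_ratio r * max (L + S) (2 powr (1 - d) * L) + 2 * (alpha_ratio r * S)"
    using adapted_norm_le[OF T_diff_holder_bounds[OF r g h, folded S_def L_def] x_0_less_N] .
  also have "\<dots> \<le> 1/2 * max (L + S) (2 powr (1 - d) * L) + S"
    using alpha_ratio_less_half[OF r] SL mult_right_mono[of "2 * alpha_ratio r" 1 S]
    by (intro add_mono mult_right_mono) auto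
  also have "\<dots> \<le> contraction_const * (L + 2 * S)" by (rule half_max_le_contraction_const[OF SL])
  finally show ?thesis unfolding S_def L_def adapted_norm_def .
qed

abbreviation "F r g \<equiv> Tcomp x N f alpha b r g"

lemma Tcomp_0: "F 0 g = g"
  by (simp add: Tcomp_def)

lemma Tcomp_Suc: "F (Suc r) g = F r (T (Suc r) g)"
  by (simp add: Tcomp_def)

lemma Tcomp_in_Lip_f: "g \<in> LF \<Longrightarrow> F r g \<in> LF"
  by (induction r arbitrary: g) (simp_all add: Tcomp_0 Tcomp_Suc T_in_Lip_f)

lemma Tcomp_contraction_adapted:
  "g \<in> LF \<Longrightarrow> h \<in> LF \<Longrightarrow>
     adapted_norm d I (\<lambda>t. F r g t - F r h t) \<le> contraction_const ^ r * adapted_norm d I (\<lambda>t. g t - h t)"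
proof (induction r arbitrary: g h)
  case (Suc r)
  have "adapted_norm d I (\<lambda>t. F (Suc r) g t - F (Suc r) h t)
          \<le> contraction_const ^ r * adapted_norm d I (\<lambda>t. T (Suc r) g t - T (Suc r) h t)"
    unfolding Tcomp_Suc by (rule Suc.IH) (simp_all add: T_in_Lip_f Suc.prems)
  also have "\<dots> \<le> contraction_const ^ r * (contraction_const * adapted_norm d I (\<lambda>t. g t - h t))"
    using T_contraction_adapted[OF _ Suc.prems] contraction_const_bounds
    by (intro mult_left_mono) auto
  finally show ?case by (simp add: mult_ac)
qed (simp add: Tcomp_0)

lemma Tcomp_f_step:
  obtains C where "0 \<le> C"
    and "\<And>r. adapted_norm d I (\<lambda>t. F r f t - F (Suc r) f t) \<le> C * contraction_const ^ r"
proof -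
  obtain B where B: "\<And>r. r \<ge> 1 \<Longrightarrow> lip_norm d I (b r) \<le> B"
    using b_bdd unfolding bdd_above_def by blast
  have f_LF: "f \<in> LF" and b_Lip: "\<And>r. r \<ge> 1 \<Longrightarrow> b r \<in> Lip d I"
    using f b by (auto simp: Lip_f_def)
  define C where "C = adapted_norm d I f + 3 * B"
  have T_f_moves: "adapted_norm d I (\<lambda>t. f t - T k f t) \<le> C" if k: "k \<ge> 1" for k
  proof -
    have "adapted_norm d I (\<lambda>t. f t - T k f t) = adapted_norm d I (\<lambda>t. T k (b k) t - T k f t)"
      by (simp add: T_b)
    also have "\<dots> \<le> contraction_const * adapted_norm d I (\<lambda>t. b k t - f t)"
      by (rule T_contraction_adapted[OF k b[OF k] f_LF])
    also have "\<dots> \<le> adapted_norm d I (\<lambda>t. b k t - f t)"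
      using contraction_const_bounds adapted_norm_nonneg[OF Lip_diff[OF b_Lip[OF k] f] x_0_less_N d(1)]
      by (intro mult_left_le_one_le) auto
    also have "\<dots> \<le> adapted_norm d I (b k) + adapted_norm d I f"
      by (rule adapted_norm_diff_le[OF b_Lip[OF k] f x_0_less_N d(1)])
    also have "\<dots> \<le> C"
      using adapted_norm_le_lip_norm[of d I "b k"] B[OF k] by (simp add: C_def)
    finally show ?thesis .
  qed
  have "adapted_norm d I (\<lambda>t. F r f t - F (Suc r) f t) \<le> C * contraction_const ^ r" for r
  proof -
    have "adapted_norm d I (\<lambda>t. F r f t - F r (T (Suc r) f) t)
            \<le> contraction_const ^ r * adapted_norm d I (\<lambda>t. f t - T (Suc r) f t)"
      by (rule Tcomp_contraction_adapted[OF f_LF T_in_Lip_f[OF _ f_LF]]) simp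
    also have "\<dots> \<le> contraction_const ^ r * C"
      using T_f_moves[of "Suc r"] contraction_const_bounds by (intro mult_left_mono) auto
    finally show ?thesis unfolding Tcomp_Suc by (simp add: mult.commute)
  qed
  moreover have "0 \<le> C"
    using adapted_norm_nonneg[OF f x_0_less_N d(1)] lip_norm_nonneg[OF b_Lip[of 1] x_0_less_N d(1)] B[of 1]
    by (simp add: C_def)
  ultimately show ?thesis using that by blast
qed

lemma Tcomp_f_limit:
  obtains fa C where "fa \<in> LF" and "0 \<le> C"
    and "\<And>r. holder_bounds d I (\<lambda>t. F r f t - fa t) (C * contraction_const ^ r) (C * contraction_const ^ r)"
proof -
  let ?c = "contraction_const"
  have f_LF: "f \<in> LF" using f by (simp add: Lip_f_def)
  obtain C where C: "0 \<le> C" and step: "\<And>r. adapted_norm d I (\<lambda>t. F r f t - F (Suc r) f t) \<le> C * ?c ^ r"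
    using Tcomp_f_step by blast
  have step_bounds: "holder_bounds d I (\<lambda>t. F r f t - F (Suc r) f t) (C * ?c ^ r) (C * ?c ^ r)" for r
    using Tcomp_in_Lip_f[OF f_LF] x_0_less_N d(1) step[of r]
    by (intro holder_bounds_mono[OF holder_bounds_adapted_norm]) (auto simp: Lip_f_def intro: Lip_diff)
  obtain fa where lim: "\<And>t. t \<in> I \<Longrightarrow> (\<lambda>r. F r f t) \<longlonglongrightarrow> fa t"
    and fa_bounds: "\<And>r. holder_bounds d I (\<lambda>t. F r f t - fa t) (C * ?c ^ r / (1 - ?c)) (C * ?c ^ r / (1 - ?c))"
    by (rule holder_bounds_geometric_limit[where \<theta> = ?c, OF _ _ C step_bounds])
      (use contraction_const_bounds in auto)
  have "(\<lambda>t. f t - (f t - fa t)) \<in> Lip d I"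
    using Lip_diff[OF f holder_bounds_imp_Lip[OF fa_bounds[of 0]]] by (simp add: Tcomp_0)
  moreover have "fa (x j) = f (x j)" if "j = 0 \<or> j = N" for j
  proof -
    have "(\<lambda>r. F r f (x j)) = (\<lambda>r. f (x j))"
      using Tcomp_in_Lip_f[OF f_LF] that by (auto simp: Lip_f_def)
    then show ?thesis using lim[of "x j"] x_le[of 0 j] x_le[of j N] that N_ge_1
      by (auto intro: LIMSEQ_unique)
  qed
  ultimately have "fa \<in> LF" by (simp add: Lip_f_def)
  moreover have "0 \<le> C / (1 - ?c)" using C contraction_const_bounds by simp
  ultimately show ?thesis using that[of fa "C / (1 - ?c)"] fa_bounds by simp
qed

lemma Tcomp_attractor: "\<exists>fa\<in>LF. \<forall>g\<in>LF. (\<lambda>r. lip_norm d I (\<lambda>t. F r g t - fa t)) \<longlonglongrightarrow> 0"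
proof -
  let ?c = "contraction_const"
  have f_LF: "f \<in> LF" using f by (simp add: Lip_f_def)
  obtain fa C where fa_LF: "fa \<in> LF"
    and fa_bounds: "\<And>r. holder_bounds d I (\<lambda>t. F r f t - fa t) (C * ?c ^ r) (C * ?c ^ r)"
    using Tcomp_f_limit by blast
  have "(\<lambda>r. lip_norm d I (\<lambda>t. F r g t - fa t)) \<longlonglongrightarrow> 0" if g: "g \<in> LF" for g
  proof -
    define R where "R = adapted_norm d I (\<lambda>t. g t - f t)"
    have orbits: "holder_bounds d I (\<lambda>t. F r g t - F r f t) (R * ?c ^ r) (R * ?c ^ r)" for r
      using Tcomp_in_Lip_f[OF g] Tcomp_in_Lip_f[OF f_LF] x_0_less_N d(1)
        Tcomp_contraction_adapted[OF g f_LF, of r]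
      by (intro holder_bounds_mono[OF holder_bounds_adapted_norm])
        (auto simp: Lip_f_def R_def mult.commute intro: Lip_diff)
    have bounds: "holder_bounds d I (\<lambda>t. F r g t - fa t) ((R + C) * ?c ^ r) ((R + C) * ?c ^ r)" for r
      using holder_bounds_add[OF orbits[of r] fa_bounds[of r]] by (simp add: algebra_simps)
    show ?thesis
    proof (rule tendsto_sandwich[OF _ _ tendsto_const])
      show "\<forall>\<^sub>F r in sequentially. 0 \<le> lip_norm d I (\<lambda>t. F r g t - fa t)"
        using lip_norm_nonneg[OF holder_bounds_imp_Lip[OF bounds] x_0_less_N d(1)] by simp
      show "\<forall>\<^sub>F r in sequentially. lip_norm d I (\<lambda>t. F r g t - fa t) \<le> (R + C) * ?c ^ r"
        using lip_norm_le[OF bounds x_0_less_N] by simp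
      show "(\<lambda>r. (R + C) * ?c ^ r) \<longlonglongrightarrow> 0"
        using contraction_const_bounds by (auto intro!: tendsto_mult_right_zero LIMSEQ_power_zero)
    qed
  qed
  with fa_LF show ?thesis by blast
qed

lemma Tcomp_limit_unique:
  assumes "h \<in> LF" "h' \<in> LF" "t \<in> I"
    and "(\<lambda>r. lip_norm d I (\<lambda>t. F r f t - h t)) \<longlonglongrightarrow> 0"
    and "(\<lambda>r. lip_norm d I (\<lambda>t. F r f t - h' t)) \<longlonglongrightarrow> 0"
  shows "h t = h' t"
proof -
  have F_f_Lip: "F r f \<in> Lip d I" for r
    using Tcomp_in_Lip_f f by (simp add: Lip_f_def)
  show ?thesis
    using assms by (intro LIMSEQ_unique[of "\<lambda>r. F r f t"] tendsto_of_lip_norm_tendsto[OF Lip_diff[OF F_f_Lip] d(1)])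
      (auto simp: Lip_f_def)
qed

end

theorem mainTheorem1:
  fixes x :: "nat \<Rightarrow> real" and N :: nat and d :: real
    and f :: "real \<Rightarrow> real" and b :: "nat \<Rightarrow> real \<Rightarrow> real"
    and alpha :: "nat \<Rightarrow> nat \<Rightarrow> real \<Rightarrow> real"
  assumes N: "N \<ge> 1"
    and part: "\<And>i. i < N \<Longrightarrow> x i < x (Suc i)"
    and d: "0 < d" "d \<le> 1"
    and f: "f \<in> Lip d {x 0..x N}"
    and b: "\<And>r. r \<ge> 1 \<Longrightarrow> b r \<in> Lip_f d (x 0) (x N) f"
    and b_bdd: "bdd_above {lip_norm d {x 0..x N} (b r) | r. r \<ge> 1}"
    and alpha: "\<And>i r. 1 \<le> i \<Longrightarrow> i \<le> N \<Longrightarrow> r \<ge> 1 \<Longrightarrow> alpha i r \<in> Lip d {x 0..x N}"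
    and alpha_small: "\<And>i r. 1 \<le> i \<Longrightarrow> i \<le> N \<Longrightarrow> r \<ge> 1 \<Longrightarrow>
           lip_norm d {x 0..x N} (alpha i r) / aa x N i powr d < 1/2"
  shows
    "(\<forall>r\<ge>1. \<forall>g\<in>Lip_f d (x 0) (x N) f.
        Tmap x N f (\<lambda>i. alpha i r) (b r) g \<in> Lip_f d (x 0) (x N) f \<and>
        (\<forall>i\<in>{1..N}. \<forall>t\<in>{x (i - 1)..x i}.
            Tmap x N f (\<lambda>i. alpha i r) (b r) g t
              = f t + alpha i r (QQ x N i t) * g (QQ x N i t)
                    - alpha i r (QQ x N i t) * b r (QQ x N i t)))
   \<and> (\<forall>r\<ge>1. \<exists>c. 0 \<le> c \<and> c < 1 \<and>
        (\<forall>g\<in>Lip_f d (x 0) (x N) f. \<forall>h\<in>Lip_f d (x 0) (x N) f.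
           lip_norm d {x 0..x N}
             (\<lambda>t. Tmap x N f (\<lambda>i. alpha i r) (b r) g t - Tmap x N f (\<lambda>i. alpha i r) (b r) h t)
           \<le> c * lip_norm d {x 0..x N} (\<lambda>t. g t - h t)))
   \<and> (\<exists>fa\<in>Lip_f d (x 0) (x N) f.
        (\<forall>g\<in>Lip_f d (x 0) (x N) f.
           (\<lambda>r. lip_norm d {x 0..x N} (\<lambda>t. Tcomp x N f alpha b r g t - fa t)) \<longlonglongrightarrow> 0)
      \<and> (\<forall>h\<in>Lip_f d (x 0) (x N) f.
           (\<forall>g\<in>Lip_f d (x 0) (x N) f.
              (\<lambda>r. lip_norm d {x 0..x N} (\<lambda>t. Tcomp x N f alpha b r g t - h t)) \<longlonglongrightarrow> 0)
           \<longrightarrow> (\<forall>t\<in>{x 0..x N}. h t = fa t)))"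
proof -
  interpret nonstationary_fif x N d f b alpha
    by unfold_locales (use assms in auto)
  have f_LF: "f \<in> LF" using f by (simp add: Lip_f_def)
  have contraction: "\<exists>c. 0 \<le> c \<and> c < 1 \<and> (\<forall>g\<in>LF. \<forall>h\<in>LF.
      lip_norm d I (\<lambda>t. T r g t - T r h t) \<le> c * lip_norm d I (\<lambda>t. g t - h t))" if "r \<ge> 1" for r
    using T_contraction[OF that] alpha_ratio_nonneg[OF that] alpha_ratio_less_half[OF that]
    by (intro exI[of _ "2 * alpha_ratio r"]) auto
  obtain fa where fa: "fa \<in> LF" and conv: "\<forall>g\<in>LF. (\<lambda>r. lip_norm d I (\<lambda>t. F r g t - fa t)) \<longlonglongrightarrow> 0"
    using Tcomp_attractor by blast
  have unique: "\<forall>t\<in>I. h t = fa t"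
    if "h \<in> LF" "\<forall>g\<in>LF. (\<lambda>r. lip_norm d I (\<lambda>t. F r g t - h t)) \<longlonglongrightarrow> 0" for h
    using that fa conv f_LF Tcomp_limit_unique by blast
  have maps: "\<forall>r\<ge>1. \<forall>g\<in>LF. T r g \<in> LF \<and> (\<forall>i\<in>{1..N}. \<forall>t\<in>{x (i - 1)..x i}.
      T r g t = f t + alpha i r (QQ x N i t) * g (QQ x N i t) - alpha i r (QQ x N i t) * b r (QQ x N i t))"
    using T_in_Lip_f T_on_piece by simp
  show ?thesis
    using maps contraction fa conv unique by blast
qed

end
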